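(* There are constants $c,C>0$ such that for all sufficiently large $n$ and all $p,q\in(0,1)$ with $\hat p=\frac{p}{p+q}\ge c\frac{\log n}{n}$, with probability at least $1-1/n$ the flooding time of the stationary edge-MEG $\mathcal{M}(n,p,q)$ is at least $C\,\frac{\log n}{\log(n\hat p)}$.
   Context: The edge-MEG $\mathcal{M}(n,p,q)=\{G_t\}$ on node set $[n]$: for each pair $e\in\binom{[n]}{2}$ there is an independent two-state Markov chain $X_t(e)\in\{0,1\}$ with $\Pr[X_{t+1}(e)=1\mid X_t(e)=0]=p$ and $\Pr[X_{t+1}(e)=0\mid X_t(e)=1]=q$; $G_t=([n],\{e:X_t(e)=1\})$. It is stationary when $G_0$ is drawn from the stationary distribution, which is the Erdős–Rényi graph $G_{n,\hat p}$, $\hat p=p/(p+q)$ (so every $G_t$ has law $G_{n,\hat p}$). Flooding from source $s$: $I_0=\{s\}$, $I_{t+1}=I_t\cup N_t(I_t)$ where $N_t(I)$ is the set of nodes outside $I$ adjacent in $G_t$ to some node of $I$; $T(s)$ is the first $t$ with $I_t=[n]$; the flooding time is $\max_s T(s)$. Logarithms are natural. *)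

theory Defs
  imports "HOL-Probability.Probability"
begin

(* Randomness source: independent Bernoulli coins indexed by (edge, time, kind).
   kind 0: initial state of the edge, Bernoulli(p/(p+q))  (stationary start);
   kind 1: at time t, used if edge absent: becomes present w.p. p;
   kind >= 2: at time t, used if edge present: stays present w.p. 1-q. *)
definition meg_space :: "real \<Rightarrow> real \<Rightarrow> ((nat \<times> nat) \<times> nat \<times> nat \<Rightarrow> bool) measure" where
  "meg_space p q = PiM UNIV (\<lambda>(e, t, k). measure_pmf (bernoulli_pmf
      (if k = 0 then p / (p + q) else if k = 1 then p else 1 - q)))"

fun meg_edge :: "((nat \<times> nat) \<times> nat \<times> nat \<Rightarrow> bool) \<Rightarrow> nat \<times> nat \<Rightarrow> nat \<Rightarrow> bool" where
  "meg_edge \<omega> e 0 = \<omega> (e, 0, 0)"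
| "meg_edge \<omega> e (Suc t) = (if meg_edge \<omega> e t then \<omega> (e, t, 2) else \<omega> (e, t, 1))"

(* adjacency in G_t; the edge {u,v} is indexed by (min u v, max u v) *)
definition meg_adj :: "((nat \<times> nat) \<times> nat \<times> nat \<Rightarrow> bool) \<Rightarrow> nat \<Rightarrow> nat \<Rightarrow> nat \<Rightarrow> bool" where
  "meg_adj \<omega> t u v = (u \<noteq> v \<and> meg_edge \<omega> (min u v, max u v) t)"

fun flood_set :: "nat \<Rightarrow> (nat \<Rightarrow> nat \<Rightarrow> nat \<Rightarrow> bool) \<Rightarrow> nat \<Rightarrow> nat \<Rightarrow> nat set" where
  "flood_set n G s 0 = {s}"
| "flood_set n G s (Suc t) = flood_set n G s t \<union>
     {v. v < n \<and> v \<notin> flood_set n G s t \<and> (\<exists>u \<in> flood_set n G s t. G t u v)}"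

definition flood_completion :: "nat \<Rightarrow> (nat \<Rightarrow> nat \<Rightarrow> nat \<Rightarrow> bool) \<Rightarrow> nat \<Rightarrow> enat" where
  "flood_completion n G s =
     (if \<exists>t. flood_set n G s t = {..<n} then enat (LEAST t. flood_set n G s t = {..<n}) else \<infinity>)"

definition flooding_time :: "nat \<Rightarrow> (nat \<Rightarrow> nat \<Rightarrow> nat \<Rightarrow> bool) \<Rightarrow> enat" where
  "flooding_time n G = Max (flood_completion n G ` {..<n})"

end

theory Submission
  imports Defs
begin

(* Flooding spreads only along edges of the current snapshot, so if in each of
   G_0, ..., G_(m-1) every node has at most D neighbours, then after m rounds at
   most (D+1)^m nodes are informed; if (D+1)^m < n the flooding time exceeds m.
   In the stationary chain every snapshot G_t has independent edges, each present
   with probability p' = p/(p+q), so a fixed node has k neighbours at time t with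
   probability at most C(n,k) p'^k <= exp(-k) as soon as k >= 9 n p'.  A union
   bound over the m*n pairs (time, node), with k about 9 n p' >= 9 ln n and
   m about ln n / (2 ln (n p')), shows the failure probability is at most 1/n. *)

definition coin_distr :: "real \<Rightarrow> real \<Rightarrow> (nat \<times> nat) \<times> nat \<times> nat \<Rightarrow> bool measure" where
  "coin_distr p q = (\<lambda>(e, t, k). measure_pmf (bernoulli_pmf
      (if k = 0 then p / (p + q) else if k = 1 then p else 1 - q)))"

lemma meg_space_PiM: "meg_space p q = PiM UNIV (coin_distr p q)"
  unfolding meg_space_def coin_distr_def by simp

lemma sets_coin_distr [simp]: "sets (coin_distr p q i) = UNIV"
  by (auto simp: coin_distr_def split: prod.splits)

lemma space_coin_distr [simp]: "space (coin_distr p q i) = UNIV"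
  by (auto simp: coin_distr_def split: prod.splits)

lemma prob_space_coin_distr: "prob_space (coin_distr p q i)"
  by (auto simp: coin_distr_def prob_space_measure_pmf split: prod.splits)

lemma product_prob_space_coins: "product_prob_space (coin_distr p q)"
  by unfold_locales (auto simp: coin_distr_def prob_space_measure_pmf split: prod.splits)

lemma prob_space_meg_space: "prob_space (meg_space p q)"
  unfolding meg_space_PiM by (rule prob_space_PiM) (rule prob_space_coin_distr)

lemma pred_coordinate: "i \<in> K \<Longrightarrow> Measurable.pred (PiM K (coin_distr p q)) (\<lambda>\<omega>. \<omega> i)"
proof -
  assume i: "i \<in> K"
  have "(\<lambda>\<omega>. \<omega> i) \<in> measurable (PiM K (coin_distr p q)) (coin_distr p q i)"
    using i by (rule measurable_component_singleton)
  moreover have "measurable (PiM K (coin_distr p q)) (coin_distr p q i)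
      = measurable (PiM K (coin_distr p q)) (count_space UNIV)"
    by (rule measurable_cong_sets) auto
  ultimately show ?thesis by simp
qed

lemma indep_coordinates:
  "prob_space.indep_vars (meg_space p q) (coin_distr p q) (\<lambda>i \<omega>. \<omega> i) UNIV"
proof -
  interpret P: prob_space "meg_space p q" by (rule prob_space_meg_space)
  interpret PP: product_prob_space "coin_distr p q" UNIV by (rule product_prob_space_coins)
  show ?thesis
  proof (subst P.indep_vars_iff_distr_eq_PiM)
    show "(\<lambda>\<omega>. \<omega> i) \<in> measurable (meg_space p q) (coin_distr p q i)" for i
      unfolding meg_space_PiM by (rule measurable_component_singleton) auto
    have "distr (meg_space p q) (Pi\<^sub>M UNIV (coin_distr p q)) (\<lambda>x. \<lambda>i\<in>UNIV. x i)
       = distr (meg_space p q) (Pi\<^sub>M UNIV (coin_distr p q)) (\<lambda>x. x)"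
      by (rule distr_cong) auto
    also have "\<dots> = meg_space p q" unfolding meg_space_PiM by (rule distr_id)
    also have "\<dots> = (\<Pi>\<^sub>M i\<in>UNIV. distr (meg_space p q) (coin_distr p q i) (\<lambda>\<omega>. \<omega> i))"
      unfolding meg_space_PiM by (intro PiM_cong refl PP.PiM_component[symmetric]) auto
    finally show "distr (meg_space p q) (Pi\<^sub>M UNIV (coin_distr p q)) (\<lambda>x. \<lambda>i\<in>UNIV. x i) =
      (\<Pi>\<^sub>M i\<in>UNIV. distr (meg_space p q) (coin_distr p q i) (\<lambda>\<omega>. \<omega> i))" .
  qed simp
qed

lemma meg_edge_restrict:
  assumes "\<And>t k. t < T \<Longrightarrow> (e, t, k) \<in> A" "(e, 0, 0) \<in> A" "t \<le> T"
  shows "meg_edge (restrict \<omega> A) e t = meg_edge \<omega> e t"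
  using assms(3) by (induction t) (auto simp: assms(1,2))

lemma pred_meg_edge:
  assumes "\<And>t k. t < T \<Longrightarrow> (e, t, k) \<in> A" "(e, 0, 0) \<in> A" "t \<le> T"
  shows "Measurable.pred (PiM A (coin_distr p q)) (\<lambda>\<omega>. meg_edge \<omega> e t)"
  using assms(3)
proof (induction t)
  case 0
  then show ?case using pred_coordinate[OF assms(2)] by simp
next
  case (Suc t)
  have [measurable]: "Measurable.pred (PiM A (coin_distr p q)) (\<lambda>\<omega>. \<omega> (e, t, k))" for k
    using Suc assms by (intro pred_coordinate) auto
  have [measurable]: "Measurable.pred (PiM A (coin_distr p q)) (\<lambda>\<omega>. meg_edge \<omega> e t)"
    using Suc by auto
  have step: "meg_edge \<omega> e (Suc t)
      \<longleftrightarrow> (meg_edge \<omega> e t \<and> \<omega> (e, t, 2)) \<or> (\<not> meg_edge \<omega> e t \<and> \<omega> (e, t, 1))" for \<omega>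
    by simp
  show ?case unfolding step by measurable
qed

definition star_event :: "real \<Rightarrow> real \<Rightarrow> nat \<Rightarrow> nat \<Rightarrow> nat set
    \<Rightarrow> ((nat \<times> nat) \<times> nat \<times> nat \<Rightarrow> bool) set" where
  "star_event p q t u S = {\<omega> \<in> space (meg_space p q). \<forall>v\<in>S. meg_adj \<omega> t u v}"

(* The event that some k of the other nodes below n are all adjacent to u at time t;
   it contains the event that u has degree at least k. *)
definition high_degree_event :: "real \<Rightarrow> real \<Rightarrow> nat \<Rightarrow> nat \<Rightarrow> nat \<Rightarrow> nat
    \<Rightarrow> ((nat \<times> nat) \<times> nat \<times> nat \<Rightarrow> bool) set" where
  "high_degree_event p q n k t u =
     (\<Union>S\<in>{S. S \<subseteq> {..<n} - {u} \<and> card S = k}. star_event p q t u S)"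

lemma high_degree_event_if_degree_ge:
  assumes "\<omega> \<in> space (meg_space p q)" "k \<le> card {v. v < n \<and> meg_adj \<omega> t u v}"
  shows "\<omega> \<in> high_degree_event p q n k t u"
proof -
  obtain S where S: "S \<subseteq> {v. v < n \<and> meg_adj \<omega> t u v}" "card S = k"
    using assms(2) obtain_subset_with_card_n by blast
  then have "S \<subseteq> {..<n} - {u}" by (auto simp: meg_adj_def)
  moreover have "\<omega> \<in> star_event p q t u S" using S assms(1) by (auto simp: star_event_def)
  ultimately show ?thesis using S(2) unfolding high_degree_event_def by blast
qed

context
  fixes p q :: real
begin

interpretation P: prob_space "meg_space p q" by (rule prob_space_meg_space)

lemma pred_edge_state: "Measurable.pred (meg_space p q) (\<lambda>\<omega>. meg_edge \<omega> e t)"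
  unfolding meg_space_PiM by (rule pred_meg_edge[where T=t]) auto

lemma events_edge_state: "{\<omega> \<in> space (meg_space p q). meg_edge \<omega> e t} \<in> P.events"
  using pred_edge_state by (rule predE)

lemma events_coin: "{\<omega> \<in> space (meg_space p q). \<omega> i} \<in> P.events"
proof -
  have "Measurable.pred (meg_space p q) (\<lambda>\<omega>. \<omega> i)"
    unfolding meg_space_PiM by (rule pred_coordinate) auto
  then show ?thesis by (rule predE)
qed

lemma events_star: "star_event p q t u S \<in> P.events"
proof -
  note [measurable] = pred_edge_state
  have "Measurable.pred (meg_space p q) (\<lambda>\<omega>. \<forall>v. v \<in> S \<longrightarrow> meg_adj \<omega> t u v)"
    unfolding meg_adj_def by measurable
  then show ?thesis by (simp add: star_event_def Ball_def pred_def)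
qed

lemma events_high_degree: "high_degree_event p q n k t u \<in> P.events"
  unfolding high_degree_event_def by (intro sets.finite_UN events_star) auto

lemma pred_flood_member: "Measurable.pred (meg_space p q) (\<lambda>\<omega>. v \<in> flood_set n (meg_adj \<omega>) s m)"
proof (induction m arbitrary: v)
  case 0
  then show ?case by simp
next
  case (Suc m)
  note [measurable] = Suc.IH pred_edge_state
  have step: "v \<in> flood_set n (meg_adj \<omega>) s (Suc m) \<longleftrightarrow> v \<in> flood_set n (meg_adj \<omega>) s m \<or>
     (v < n \<and> v \<notin> flood_set n (meg_adj \<omega>) s m \<and> (\<exists>u. u \<in> flood_set n (meg_adj \<omega>) s m \<and>
        u \<noteq> v \<and> meg_edge \<omega> (min u v, max u v) m))" for \<omega>
    by (auto simp: meg_adj_def)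
  show ?case unfolding step by measurable
qed

(* Distinct edges evolve from disjoint sets of coins, so their states at a fixed
   time are independent. *)
lemma indep_edges_at_time:
  "P.indep_vars (\<lambda>_. count_space UNIV) (\<lambda>e \<omega>. meg_edge \<omega> e t) UNIV"
proof -
  define coins_of :: "nat \<times> nat \<Rightarrow> ((nat \<times> nat) \<times> nat \<times> nat) set"
    where "coins_of e = {e} \<times> UNIV" for e
  have "P.indep_vars (\<lambda>e. PiM (coins_of e) (coin_distr p q))
      (\<lambda>e \<omega>. restrict (\<lambda>i. \<omega> i) (coins_of e)) UNIV"
    by (rule P.indep_vars_restrict[OF indep_coordinates])
       (auto simp: coins_of_def disjoint_family_on_def)
  then have "P.indep_vars (\<lambda>_. count_space UNIV)
      (\<lambda>e \<omega>. meg_edge (restrict (\<lambda>i. \<omega> i) (coins_of e)) e t) UNIV"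
    by (rule P.indep_vars_compose2[where Y="\<lambda>e x. meg_edge x e t"])
       (rule pred_meg_edge[where T=t], auto simp: coins_of_def)
  moreover have "meg_edge (restrict (\<lambda>i. \<omega> i) (coins_of e)) e t = meg_edge \<omega> e t" for \<omega> e
    by (rule meg_edge_restrict[where T=t]) (auto simp: coins_of_def)
  ultimately show ?thesis by simp
qed

lemma indep_edge_state_coin:
  assumes "k \<noteq> 0"
  shows "P.indep_var (count_space UNIV) (\<lambda>\<omega>. meg_edge \<omega> e t)
           (count_space UNIV) (\<lambda>\<omega>. \<omega> (e, t, k))"
proof -
  define A where "A = {i :: (nat \<times> nat) \<times> nat \<times> nat. fst (snd i) < t \<or> snd (snd i) = 0}"
  define B where "B = {i :: (nat \<times> nat) \<times> nat \<times> nat. fst (snd i) = t \<and> snd (snd i) \<noteq> 0}"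
  have "P.indep_var (PiM A (coin_distr p q)) (\<lambda>\<omega>. restrict (\<lambda>i. \<omega> i) A)
      (PiM B (coin_distr p q)) (\<lambda>\<omega>. restrict (\<lambda>i. \<omega> i) B)"
    by (rule P.indep_var_restrict[OF indep_coordinates]) (auto simp: A_def B_def)
  moreover have "Measurable.pred (PiM A (coin_distr p q)) (\<lambda>x. meg_edge x e t)"
    by (rule pred_meg_edge[where T=t]) (auto simp: A_def)
  moreover have "Measurable.pred (PiM B (coin_distr p q)) (\<lambda>x. x (e, t, k))"
    using assms by (intro pred_coordinate) (auto simp: B_def)
  ultimately have composed: "P.indep_var (count_space UNIV) ((\<lambda>x. meg_edge x e t) \<circ> (\<lambda>\<omega>. restrict (\<lambda>i. \<omega> i) A))
      (count_space UNIV) ((\<lambda>x. x (e, t, k)) \<circ> (\<lambda>\<omega>. restrict (\<lambda>i. \<omega> i) B))"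
    by (rule P.indep_var_compose)
  have state: "(\<lambda>x. meg_edge x e t) \<circ> (\<lambda>\<omega>. restrict (\<lambda>i. \<omega> i) A) = (\<lambda>\<omega>. meg_edge \<omega> e t)"
    by (rule ext, simp, rule meg_edge_restrict[where T=t]) (auto simp: A_def)
  have coin: "(\<lambda>x. x (e, t, k)) \<circ> (\<lambda>\<omega>. restrict (\<lambda>i. \<omega> i) B) = (\<lambda>\<omega>. \<omega> (e, t, k))"
    using assms by (auto simp: B_def)
  show ?thesis using composed unfolding state coin .
qed

context
  assumes pq: "0 \<le> p" "p \<le> 1" "0 \<le> q" "q \<le> 1" "0 < p + q"
begin

lemma prob_coin: "P.prob {\<omega> \<in> space (meg_space p q). \<omega> (e, t, k)} =
   (if k = 0 then p / (p + q) else if k = 1 then p else 1 - q)"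
proof -
  interpret PP: product_prob_space "coin_distr p q" UNIV by (rule product_prob_space_coins)
  have "emeasure (meg_space p q) {\<omega> \<in> space (meg_space p q). \<omega> (e, t, k) \<in> {True}}
      = emeasure (coin_distr p q (e, t, k)) {True}"
    unfolding meg_space_PiM by (rule PP.emeasure_PiM_Collect_single) auto
  moreover have "p / (p + q) \<le> 1" using pq by simp
  ultimately show ?thesis using pq
    by (simp add: P.emeasure_eq_measure coin_distr_def emeasure_pmf_single)
qed

lemma prob_edge_state_and_coin:
  assumes "k \<noteq> 0"
  shows "P.prob {\<omega> \<in> space (meg_space p q). meg_edge \<omega> e t = b \<and> \<omega> (e, t, k)}
     = P.prob {\<omega> \<in> space (meg_space p q). meg_edge \<omega> e t = b}
       * P.prob {\<omega> \<in> space (meg_space p q). \<omega> (e, t, k)}"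
  using P.prob_indep_random_variable[OF indep_edge_state_coin[OF assms, of e t], of "{b}" "{True}"]
  by simp

(* Stationarity: p/(p+q) is invariant under the transition p' (1-q) + (1-p') p. *)
lemma edge_marginal: "P.prob {\<omega> \<in> space (meg_space p q). meg_edge \<omega> e t} = p / (p + q)"
proof (induction t)
  case 0
  then show ?case using prob_coin[of e 0 0] by simp
next
  case (Suc t)
  let ?S = "space (meg_space p q)"
  let ?X = "{\<omega> \<in> ?S. meg_edge \<omega> e t}"
  let ?stay = "{\<omega> \<in> ?S. meg_edge \<omega> e t = True \<and> \<omega> (e, t, 2)}"
  let ?born = "{\<omega> \<in> ?S. meg_edge \<omega> e t = False \<and> \<omega> (e, t, 1)}"
  have split: "{\<omega> \<in> ?S. meg_edge \<omega> e (Suc t)} = ?stay \<union> ?born" by auto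
  have "?stay = ?X \<inter> {\<omega> \<in> ?S. \<omega> (e, t, 2)}" "?born = (?S - ?X) \<inter> {\<omega> \<in> ?S. \<omega> (e, t, 1)}"
    by auto
  then have events: "?stay \<in> P.events" "?born \<in> P.events"
    using events_edge_state[of e t] events_coin by auto
  have absent: "{\<omega> \<in> ?S. meg_edge \<omega> e t = False} = ?S - ?X" by auto
  have "P.prob {\<omega> \<in> ?S. meg_edge \<omega> e (Suc t)} = P.prob ?stay + P.prob ?born"
    unfolding split by (rule P.finite_measure_Union[OF events]) auto
  also have "\<dots> = p / (p + q) * (1 - q) + (1 - p / (p + q)) * p"
    using prob_edge_state_and_coin[of 2 e t True] prob_edge_state_and_coin[of 1 e t False]
      Suc prob_coin[of e t 2] prob_coin[of e t 1] P.prob_compl[OF events_edge_state[of e t]] absent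
    by simp
  also have "\<dots> = (p * (1 - q) + q * p) / (p + q)"
  proof -
    have "1 - p / (p + q) = q / (p + q)" using pq by (simp add: field_simps)
    then show ?thesis by (simp add: add_divide_distrib)
  qed
  also have "p * (1 - q) + q * p = p" by (simp add: algebra_simps)
  finally show ?case .
qed

lemma prob_all_edges_present:
  assumes "finite E"
  shows "P.prob {\<omega> \<in> space (meg_space p q). \<forall>e\<in>E. meg_edge \<omega> e t} = (p / (p + q)) ^ card E"
proof (cases "E = {}")
  case True
  then show ?thesis by (simp add: P.prob_space)
next
  case False
  let ?present = "\<lambda>e. (\<lambda>\<omega>. meg_edge \<omega> e t) -` {True} \<inter> space (meg_space p q)"
  have "P.prob (\<Inter>e\<in>E. ?present e) = (\<Prod>e\<in>E. P.prob (?present e))"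
    by (rule P.indep_varsD[OF indep_edges_at_time]) (use False assms in auto)
  moreover have "(\<Inter>e\<in>E. ?present e) = {\<omega> \<in> space (meg_space p q). \<forall>e\<in>E. meg_edge \<omega> e t}"
    using False by auto
  moreover have "?present e = {\<omega> \<in> space (meg_space p q). meg_edge \<omega> e t}" for e
    by auto
  ultimately show ?thesis using edge_marginal by simp
qed

lemma prob_star:
  assumes "finite S" "u \<notin> S"
  shows "P.prob (star_event p q t u S) = (p / (p + q)) ^ card S"
proof -
  let ?edge = "\<lambda>v. (min u v, max u v)"
  have inj: "inj_on ?edge S"
    using assms(2) by (auto simp: inj_on_def min_def max_def split: if_splits)
  have "star_event p q t u S
      = {\<omega> \<in> space (meg_space p q). \<forall>e\<in>?edge ` S. meg_edge \<omega> e t}"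
    using assms(2) by (auto simp: star_event_def meg_adj_def)
  then show ?thesis
    using prob_all_edges_present[of "?edge ` S" t] assms(1) card_image[OF inj] by simp
qed

lemma prob_high_degree:
  "P.prob (high_degree_event p q n k t u) \<le> real (n choose k) * (p / (p + q)) ^ k"
proof -
  let ?F = "{S. S \<subseteq> {..<n} - {u} \<and> card S = k}"
  have fin: "finite ?F" by (rule finite_subset[of _ "Pow {..<n}"]) auto
  have "card ?F \<le> card {S. S \<subseteq> {..<n} \<and> card S = k}"
    by (rule card_mono) (auto intro: finite_subset[of _ "Pow {..<n}"])
  also have "\<dots> = n choose k" by (subst n_subsets) auto
  finally have card_F: "card ?F \<le> n choose k" .
  have "P.prob (high_degree_event p q n k t u) \<le> (\<Sum>S\<in>?F. P.prob (star_event p q t u S))"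
    unfolding high_degree_event_def
    by (rule P.finite_measure_subadditive_finite[OF fin]) (auto intro: events_star)
  also have "\<dots> = (\<Sum>S\<in>?F. (p / (p + q)) ^ k)"
    by (rule sum.cong) (auto intro!: prob_star dest: finite_subset)
  also have "\<dots> = real (card ?F) * (p / (p + q)) ^ k" by simp
  also have "\<dots> \<le> real (n choose k) * (p / (p + q)) ^ k"
    using card_F pq by (intro mult_right_mono) auto
  finally show ?thesis .
qed

end

end

lemma power_div_fact_le_exp:
  fixes y :: real
  assumes "0 \<le> y"
  shows "y ^ k / fact k \<le> exp y"
proof -
  have s: "summable (\<lambda>n. y ^ n /\<^sub>R fact n)" using exp_converges[of y] sums_summable by blast
  have "(\<Sum>n\<in>{k}. y ^ n /\<^sub>R fact n) \<le> (\<Sum>n. y ^ n /\<^sub>R fact n)"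
    by (rule sum_le_suminf[OF s]) (use assms in auto)
  also have "\<dots> = exp y" using exp_converges[of y] sums_unique by metis
  finally show ?thesis by (simp add: divide_inverse mult.commute)
qed

(* Binomial tail: C(n,k) x^k <= (n x)^k / k! <= exp(9 n x) / 9^k, which is at most
   exp(-k) once k >= 9 n x (using e^2 <= 9). *)
lemma binomial_tail_bound:
  fixes x :: real
  assumes x: "0 \<le> x" and k: "9 * (real n * x) \<le> real k"
  shows "real (n choose k) * x ^ k \<le> exp (- real k)"
proof -
  let ?y = "9 * (real n * x)"
  have "real (n choose k) * fact k \<le> real n ^ k"
    using binomial_fact_pow[of n k] by (metis of_nat_fact of_nat_le_iff of_nat_mult of_nat_power)
  then have "real (n choose k) \<le> real n ^ k / fact k" by (simp add: field_simps)
  then have "real (n choose k) * x ^ k \<le> real n ^ k / fact k * x ^ k"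
    using x by (intro mult_right_mono) auto
  also have "\<dots> = ?y ^ k / fact k / 9 ^ k" by (simp add: power_mult_distrib field_simps)
  also have "\<dots> \<le> exp ?y / 9 ^ k"
    using power_div_fact_le_exp[of ?y k] x by (intro divide_right_mono) auto
  also have "\<dots> \<le> exp (real k) / exp 2 ^ k"
  proof -
    have "exp (2::real) = exp 1 * exp 1" by (simp add: exp_add[symmetric])
    also have "\<dots> \<le> 3 * 3" using exp_le by (intro mult_mono) auto
    finally have "exp 2 ^ k \<le> (9::real) ^ k" by (intro power_mono) auto
    then show ?thesis using k by (intro frac_le) auto
  qed
  also have "\<dots> = exp (- real k)"
    by (simp add: exp_of_nat_mult[symmetric] exp_minus field_simps exp_add[symmetric])
  finally show ?thesis .
qed

lemma flood_set_subset: "s < n \<Longrightarrow> flood_set n G s t \<subseteq> {..<n}"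
  by (induction t) auto

lemma flood_set_mono: "t \<le> t' \<Longrightarrow> flood_set n G s t \<subseteq> flood_set n G s t'"
  by (induction t' rule: dec_induct) auto

lemma finite_flood_set: "finite (flood_set n G s t)"
  by (induction t) auto

lemma card_flood_set_le:
  assumes s: "s < n"
    and deg: "\<And>\<tau> u. \<tau> < m \<Longrightarrow> u < n \<Longrightarrow> card {v. v < n \<and> G \<tau> u v} \<le> D"
  shows "card (flood_set n G s m) \<le> (D + 1) ^ m"
  using deg
proof (induction m)
  case 0
  then show ?case by simp
next
  case (Suc m)
  let ?I = "flood_set n G s m"
  let ?new = "\<Union>u\<in>?I. {v. v < n \<and> G m u v}"
  have "card (flood_set n G s (Suc m)) \<le> card (?I \<union> ?new)"
    by (rule card_mono) (auto simp: finite_flood_set)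
  also have "\<dots> \<le> card ?I + card ?new"
    by (rule card_Un_le)
  also have "card ?new \<le> (\<Sum>u\<in>?I. card {v. v < n \<and> G m u v})"
    by (rule card_UN_le) (simp add: finite_flood_set)
  also have "\<dots> \<le> card ?I * D"
    using sum_mono[of ?I "\<lambda>u. card {v. v < n \<and> G m u v}" "\<lambda>_. D"] Suc.prems flood_set_subset[OF s]
    by fastforce
  also have "card ?I + card ?I * D = card ?I * (D + 1)" by (simp add: algebra_simps)
  also have "\<dots> \<le> (D + 1) ^ m * (D + 1)" using Suc by (intro mult_right_mono) auto
  finally show ?case by (simp add: mult.commute)
qed

lemma flood_completion_ge_iff:
  assumes s: "s < n"
  shows "enat (Suc m) \<le> flood_completion n G s \<longleftrightarrow> flood_set n G s m \<noteq> {..<n}"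
proof (cases "\<exists>t. flood_set n G s t = {..<n}")
  case True
  let ?T = "LEAST t. flood_set n G s t = {..<n}"
  have done_at_T: "flood_set n G s ?T = {..<n}" using True by (rule LeastI_ex)
  have "m < ?T \<longleftrightarrow> flood_set n G s m \<noteq> {..<n}"
  proof
    assume "m < ?T"
    then show "flood_set n G s m \<noteq> {..<n}" using not_less_Least by blast
  next
    assume incomplete: "flood_set n G s m \<noteq> {..<n}"
    show "m < ?T"
    proof (rule ccontr)
      assume "\<not> m < ?T"
      then have "flood_set n G s ?T \<subseteq> flood_set n G s m" by (intro flood_set_mono) simp
      then show False using done_at_T flood_set_subset[OF s, of G m] incomplete by auto
    qed
  qed
  then show ?thesis using True by (simp add: flood_completion_def Suc_le_eq)
next
  case False
  then show ?thesis by (auto simp: flood_completion_def)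
qed

lemma flooding_time_ge_iff:
  assumes n: "0 < n"
  shows "enat (Suc m) \<le> flooding_time n G \<longleftrightarrow> (\<exists>s<n. \<exists>v<n. v \<notin> flood_set n G s m)"
proof -
  have "enat (Suc m) \<le> flooding_time n G \<longleftrightarrow> (\<exists>s<n. enat (Suc m) \<le> flood_completion n G s)"
    unfolding flooding_time_def using n by (subst Max_ge_iff) auto
  also have "\<dots> \<longleftrightarrow> (\<exists>s<n. flood_set n G s m \<noteq> {..<n})"
    using flood_completion_ge_iff by auto
  also have "\<dots> \<longleftrightarrow> (\<exists>s<n. \<exists>v<n. v \<notin> flood_set n G s m)"
    using flood_set_subset[of _ n G m] by blast
  finally show ?thesis .
qed

lemma flooding_time_ge_if_degrees_bounded:
  assumes s: "s < n"
    and deg: "\<And>\<tau> u. \<tau> < m \<Longrightarrow> u < n \<Longrightarrow> card {v. v < n \<and> G \<tau> u v} \<le> D"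
    and small: "(D + 1) ^ m < n"
  shows "enat (Suc m) \<le> flooding_time n G"
proof -
  have "card (flood_set n G s m) \<le> (D + 1) ^ m" by (rule card_flood_set_le[OF s deg])
  then have "card (flood_set n G s m) < card {..<n}" using small by simp
  then have "\<exists>v<n. v \<notin> flood_set n G s m"
    using card_mono[OF finite_flood_set] by (metis lessThan_iff not_le subsetI)
  then show ?thesis using s flooding_time_ge_iff[where n=n and G=G and m=m] by auto
qed

lemma prob_flooding_time_ge:
  assumes pq: "0 \<le> p" "p \<le> 1" "0 \<le> q" "q \<le> 1" "0 < p + q"
    and n: "0 < n" and k: "1 \<le> k" "k ^ m < n"
  shows "1 - real m * real n * (real (n choose k) * (p / (p + q)) ^ k)
    \<le> measure (meg_space p q)
        {\<omega> \<in> space (meg_space p q). enat (Suc m) \<le> flooding_time n (meg_adj \<omega>)}"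
proof -
  interpret P: prob_space "meg_space p q" by (rule prob_space_meg_space)
  let ?S = "space (meg_space p q)"
  let ?I = "{..<m} \<times> {..<n}"
  define T where "T = {\<omega> \<in> ?S. enat (Suc m) \<le> flooding_time n (meg_adj \<omega>)}"
  define U where "U = (\<Union>(\<tau>, u)\<in>?I. high_degree_event p q n k \<tau> u)"
  note [measurable] = pred_flood_member
  have "T = {\<omega> \<in> ?S. \<exists>s<n. \<exists>v<n. v \<notin> flood_set n (meg_adj \<omega>) s m}"
    unfolding T_def flooding_time_ge_iff[OF n] ..
  moreover have "Measurable.pred (meg_space p q) (\<lambda>\<omega>. \<exists>s<n. \<exists>v<n. v \<notin> flood_set n (meg_adj \<omega>) s m)"
    by measurable
  ultimately have T_event: "T \<in> P.events" by (simp add: pred_def)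
  have k_pred: "k - 1 + 1 = k" using k(1) by arith
  have "?S - T \<subseteq> U"
  proof
    fix \<omega> assume \<omega>: "\<omega> \<in> ?S - T"
    show "\<omega> \<in> U"
    proof (rule ccontr)
      assume not_U: "\<omega> \<notin> U"
      have deg: "card {v. v < n \<and> meg_adj \<omega> \<tau> u v} \<le> k - 1" if "\<tau> < m" "u < n" for \<tau> u
      proof -
        have "\<omega> \<notin> high_degree_event p q n k \<tau> u" using not_U that unfolding U_def by blast
        then have "\<not> k \<le> card {v. v < n \<and> meg_adj \<omega> \<tau> u v}"
          using high_degree_event_if_degree_ge[of \<omega> p q k n \<tau> u] \<omega> by blast
        then show ?thesis by arith
      qed
      have "(k - 1 + 1) ^ m < n" unfolding k_pred by (rule k(2))
      then have "enat (Suc m) \<le> flooding_time n (meg_adj \<omega>)"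
        using flooding_time_ge_if_degrees_bounded[where s=0 and D="k - 1"] n deg by blast
      then show False using \<omega> unfolding T_def by simp
    qed
  qed
  then have "P.prob (?S - T) \<le> P.prob U"
    by (rule P.finite_measure_mono) (auto simp: U_def intro!: sets.finite_UN events_high_degree)
  also have "\<dots> \<le> (\<Sum>(\<tau>, u)\<in>?I. P.prob (high_degree_event p q n k \<tau> u))"
  proof -
    have "P.prob (\<Union>i\<in>?I. case i of (\<tau>, u) \<Rightarrow> high_degree_event p q n k \<tau> u)
        \<le> (\<Sum>i\<in>?I. P.prob (case i of (\<tau>, u) \<Rightarrow> high_degree_event p q n k \<tau> u))"
      by (rule P.finite_measure_subadditive_finite) (auto intro: events_high_degree)
    then show ?thesis unfolding U_def by (simp only: prod.case_distrib)
  qed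
  also have "\<dots> \<le> (\<Sum>(\<tau>, u)\<in>?I. real (n choose k) * (p / (p + q)) ^ k)"
    by (rule sum_mono) (use prob_high_degree[OF pq] in \<open>simp add: split_def\<close>)
  also have "\<dots> = real m * real n * (real (n choose k) * (p / (p + q)) ^ k)" by simp
  finally show ?thesis using P.prob_compl[OF T_event] unfolding T_def by linarith
qed

(* With k = ceil(9 x) and m < ln n / (2 ln x) rounds, k^m < n, because k <= x^2. *)
lemma rounds_power_below:
  fixes x B :: real
  assumes x: "10 \<le> x" and n: "0 < n" and B: "0 < B" "2 * B * ln x \<le> ln (real n)"
  shows "nat \<lceil>9 * x\<rceil> ^ (nat \<lceil>B\<rceil> - 1) < n"
proof -
  let ?k = "nat \<lceil>9 * x\<rceil>" and ?m = "nat \<lceil>B\<rceil> - 1"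
  have "real ?k \<le> 9 * x + 1" using x by linarith
  also have "\<dots> \<le> x ^ 2"
  proof -
    have "10 * x \<le> x * x" using x by (intro mult_right_mono) auto
    then show ?thesis unfolding power2_eq_square using x by linarith
  qed
  finally have "real ?k ^ ?m \<le> (x ^ 2) ^ ?m" by (intro power_mono) auto
  also have "\<dots> = exp (real (2 * ?m) * ln x)"
    by (subst exp_of_nat_mult) (use x in \<open>simp add: power_mult\<close>)
  also have "\<dots> < exp (ln (real n))"
  proof -
    have "real ?m < B" using B by linarith
    then have "real (2 * ?m) * ln x < 2 * B * ln x" using x by simp
    then show ?thesis using B by simp
  qed
  also have "\<dots> = real n" using n by simp
  finally show ?thesis by (metis of_nat_less_iff of_nat_power)
qed

lemma union_bound_small:
  assumes n: "0 < n" and m: "m \<le> n" and k: "3 * ln (real n) \<le> real k"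
  shows "real m * real n * exp (- real k) \<le> 1 / real n"
proof -
  have "exp (- real k) \<le> exp (- (real 3 * ln (real n)))" using k by simp
  also have "\<dots> = 1 / real n ^ 3"
    using n by (simp only: exp_minus exp_of_nat_mult exp_ln of_nat_0_less_iff) (simp add: inverse_eq_divide)
  finally have "real m * real n * exp (- real k) \<le> real n * real n * (1 / real n ^ 3)"
    using m by (intro mult_mono) auto
  also have "\<dots> = 1 / real n" using n by (simp add: power3_eq_cube)
  finally show ?thesis .
qed

lemma ereal_le_enat_iff:
  fixes B :: real
  assumes "0 < B"
  shows "ereal B \<le> ereal_of_enat x \<longleftrightarrow> enat (Suc (nat \<lceil>B\<rceil> - 1)) \<le> x"
proof (cases x)
  case (enat f)
  have "B \<le> real f \<longleftrightarrow> nat \<lceil>B\<rceil> \<le> f" using assms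
    by (metis ceiling_le_iff nat_le_iff of_int_of_nat_eq)
  moreover have "Suc (nat \<lceil>B\<rceil> - 1) = nat \<lceil>B\<rceil>" using assms by linarith
  ultimately show ?thesis using enat by simp
next
  case infinity
  then show ?thesis by simp
qed

(* The theorem for a single n with ln n >= 10, taking c = 1 and C = 1/2. *)
lemma flooding_time_lower_bound:
  fixes n :: nat and p q :: real
  assumes ln_n: "10 \<le> ln (real n)" and pq: "0 < p" "p < 1" "0 < q" "q < 1"
    and dense: "1 * ln (real n) / real n \<le> p / (p + q)"
  shows "1 - 1 / real n \<le> measure (meg_space p q)
       {\<omega> \<in> space (meg_space p q).
          ereal (1 / 2 * ln (real n) / ln (real n * (p / (p + q))))
            \<le> ereal_of_enat (flooding_time n (meg_adj \<omega>))}"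
proof -
  define x where "x = real n * (p / (p + q))"
  define B where "B = 1 / 2 * ln (real n) / ln x"
  define m where "m = nat \<lceil>B\<rceil> - 1"
  define k where "k = nat \<lceil>9 * x\<rceil>"
  have n: "0 < n" using ln_n by (cases n) auto
  have x: "ln (real n) \<le> x" using dense n by (simp add: x_def field_simps)
  have "exp 1 \<le> x" "0 < x" using exp_le ln_n x by linarith+
  then have ln_x: "1 \<le> ln x" by (simp add: ln_ge_iff)
  have B: "0 < B" "2 * B * ln x \<le> ln (real n)" using ln_n ln_x by (auto simp: B_def)
  have m_B: "real m < B" using B(1) unfolding m_def by linarith
  have "B \<le> 1 / 2 * ln (real n)" using ln_x ln_n by (simp add: B_def divide_le_eq)
  then have m: "m \<le> n" using m_B ln_le_minus_one[of "real n"] n by linarith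
  have k9: "9 * x \<le> real k" unfolding k_def by linarith
  then have k1: "1 \<le> k" using x ln_n by linarith
  have few_rounds: "k ^ m < n"
    unfolding k_def m_def by (rule rounds_power_below[OF _ n B]) (use ln_n x in linarith)
  have "real (n choose k) * (p / (p + q)) ^ k \<le> exp (- real k)"
    by (rule binomial_tail_bound) (use pq k9 in \<open>simp_all add: x_def\<close>)
  then have "real m * real n * (real (n choose k) * (p / (p + q)) ^ k)
      \<le> real m * real n * exp (- real k)"
    by (intro mult_left_mono) auto
  also have "\<dots> \<le> 1 / real n" by (rule union_bound_small[OF n m]) (use k9 x ln_n in linarith)
  finally have "1 - 1 / real n \<le> 1 - real m * real n * (real (n choose k) * (p / (p + q)) ^ k)"
    by linarith
  also have "\<dots> \<le> measure (meg_space p q)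
      {\<omega> \<in> space (meg_space p q). enat (Suc m) \<le> flooding_time n (meg_adj \<omega>)}"
    using pq by (intro prob_flooding_time_ge n k1 few_rounds) auto
  also have "\<dots> = measure (meg_space p q)
      {\<omega> \<in> space (meg_space p q). ereal B \<le> ereal_of_enat (flooding_time n (meg_adj \<omega>))}"
    using B(1) by (simp add: ereal_le_enat_iff m_def)
  finally show ?thesis unfolding x_def[symmetric] B_def[symmetric] .
qed

theorem mainTheorem14:
  "\<exists>c > 0. \<exists>C > 0. \<forall>\<^sub>F n in sequentially. \<forall>p q :: real.
     0 < p \<and> p < 1 \<and> 0 < q \<and> q < 1 \<and> p / (p + q) \<ge> c * ln (real n) / real n \<longrightarrow>
     measure (meg_space p q)
       {\<omega> \<in> space (meg_space p q).
          ereal (C * ln (real n) / ln (real n * (p / (p + q))))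
            \<le> ereal_of_enat (flooding_time n (meg_adj \<omega>))}
     \<ge> 1 - 1 / real n"
proof (rule exI[of _ 1], intro conjI exI[of _ "1 / 2"])
  have "filterlim (\<lambda>n. ln (real n)) at_top sequentially"
    by (rule filterlim_compose[OF ln_at_top filterlim_real_sequentially])
  then have "\<forall>\<^sub>F n in sequentially. 10 \<le> ln (real n)" by (simp add: filterlim_at_top)
  then show "\<forall>\<^sub>F n in sequentially. \<forall>p q :: real.
     0 < p \<and> p < 1 \<and> 0 < q \<and> q < 1 \<and> p / (p + q) \<ge> 1 * ln (real n) / real n \<longrightarrow>
     measure (meg_space p q)
       {\<omega> \<in> space (meg_space p q).
          ereal (1 / 2 * ln (real n) / ln (real n * (p / (p + q))))
            \<le> ereal_of_enat (flooding_time n (meg_adj \<omega>))}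
     \<ge> 1 - 1 / real n"
    by eventually_elim (use flooding_time_lower_bound in blast)
qed simp_all

end
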